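(* Let $K$ be a commutative ring of characteristic $0$ with unit and $M$ a multiplicative $\mathbb{R}$-vector subspace of $\mathcal{H}^{>0}$. Let $F$ be an $M$-generalized power series over $K$ with generating monomials $m_0,\dots,m_k$ such that $\operatorname{lm}(F)$ is small, and let $P\in K[[T]]$. (1) $P\circ F$ is an $M$-generalized power series with generating monomials $m_0,\dots,m_k$. (2) Assume in addition that $\operatorname{supp}(F)$ is $M$-natural and the sequence $(\operatorname{lm}(F)^\nu:\nu\in\mathbb{N})$ is coinitial in $M$. Then $P\circ F$ has $M$-natural support.
   Context: $\mathcal{H}$ is the Hardy field of germs at $+\infty$ of unary functions definable in $\mathbb{R}_{\mathrm{an},\exp}$, totally ordered by eventual comparison; a germ is small if it tends to $0$. A generalized power series over $K$ in $X=(X_0,\dots,X_k)$ is $\sum_{\alpha\in[0,\infty)^{k+1}}a_\alpha X^\alpha$ with support in a product of well-ordered subsets of $\mathbb{R}$; these form a ring $K[[X^*]]$; the support is natural if for each $a>0$ and each $i$, $[0,a)\cap\Pi_i(\operatorname{supp}G)$ is finite. An $M$-generalized power series with generating monomials $m_0,\dots,m_k$ (small elements of $M$) is a series $G(m)=\sum_{n\in M}\big(\sum_{\alpha\in\operatorname{supp}G,\,m^\alpha=n}a_\alpha\big)n$ in the ring $K((M))$ of formal series with anti-well-ordered support, for some $G\in K[[X^*]]$ with natural support; $\operatorname{lm}$ denotes the largest support element. Composition: if $P=\sum_\nu a_\nu T^\nu$ and $F=G(m)$ with $G$ of natural support, then since $\operatorname{lm}(F)$ is small, $G$ has positive order, the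 sum $P\circ G:=\sum_\nu a_\nu G^\nu$ is a well-defined element of $K[[X^*]]$, and $P\circ F:=(P\circ G)(m)$; this does not depend on the choice of $G$. A subset $S\subseteq M$ is $M$-natural if $S\cap(a,+\infty)$ is finite for all $a\in M$; coinitial in $M$ means that for every $m\in M$ some term of the sequence is $\le m$. *)

theory Defs
  imports Complex_Main "HOL-Computational_Algebra.Formal_Power_Series"
begin

definition germ_eq :: "(real \<Rightarrow> real) \<Rightarrow> (real \<Rightarrow> real) \<Rightarrow> bool" where
  "germ_eq f g \<longleftrightarrow> (\<forall>\<^sub>F x in at_top. f x = g x)"

quotient_type germ = "real \<Rightarrow> real" / germ_eq
proof (rule equivpI)
  show "reflp germ_eq" by (simp add: reflp_def germ_eq_def)
  show "symp germ_eq" by (auto simp: symp_def germ_eq_def eq_commute)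
  show "transp germ_eq" unfolding transp_def germ_eq_def
    by (auto elim: eventually_elim2)
qed

instantiation germ :: comm_monoid_mult
begin
lift_definition one_germ :: germ is "\<lambda>x. 1" .
lift_definition times_germ :: "germ \<Rightarrow> germ \<Rightarrow> germ" is "\<lambda>f g x. f x * g x"
  unfolding germ_eq_def by (auto elim: eventually_elim2)
instance
  by standard (transfer, simp add: germ_eq_def algebra_simps)+
end

lift_definition gpowr :: "germ \<Rightarrow> real \<Rightarrow> germ" is "\<lambda>f r x. f x powr r"
  unfolding germ_eq_def by (auto elim: eventually_mono)

lift_definition gless :: "germ \<Rightarrow> germ \<Rightarrow> bool" is
  "\<lambda>f g. \<forall>\<^sub>F x in at_top. f x < g x"
proof -
  fix f f' g g' :: "real \<Rightarrow> real"
  assume a: "germ_eq f f'" "germ_eq g g'"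
  have "\<forall>\<^sub>F x in at_top. f x = f' x \<and> g x = g' x"
    using a unfolding germ_eq_def by (auto intro: eventually_conj)
  then show "(\<forall>\<^sub>F x in at_top. f x < g x) = (\<forall>\<^sub>F x in at_top. f' x < g' x)"
    by (auto elim: eventually_elim2)
qed

lift_definition gle :: "germ \<Rightarrow> germ \<Rightarrow> bool" is
  "\<lambda>f g. \<forall>\<^sub>F x in at_top. f x \<le> g x"
proof -
  fix f f' g g' :: "real \<Rightarrow> real"
  assume a: "germ_eq f f'" "germ_eq g g'"
  have "\<forall>\<^sub>F x in at_top. f x = f' x \<and> g x = g' x"
    using a unfolding germ_eq_def by (auto intro: eventually_conj)
  then show "(\<forall>\<^sub>F x in at_top. f x \<le> g x) = (\<forall>\<^sub>F x in at_top. f' x \<le> g' x)"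
    by (auto elim: eventually_elim2)
qed

lift_definition gpos :: "germ \<Rightarrow> bool" is "\<lambda>f. \<forall>\<^sub>F x in at_top. f x > 0"
proof -
  fix f f' :: "real \<Rightarrow> real"
  assume a: "germ_eq f f'"
  then show "(\<forall>\<^sub>F x in at_top. f x > 0) = (\<forall>\<^sub>F x in at_top. f' x > 0)"
    unfolding germ_eq_def by (auto elim: eventually_elim2)
qed

lift_definition gsmall :: "germ \<Rightarrow> bool" is "\<lambda>f. (f \<longlongrightarrow> 0) at_top"
  unfolding germ_eq_def using tendsto_cong by blast

text \<open>M is a multiplicative R-vector subspace of the positive germs, totally ordered
  by eventual comparison (as any subset of the Hardy field H is).\<close>
definition mult_R_subspace :: "germ set \<Rightarrow> bool" where
  "mult_R_subspace M \<longleftrightarrow> M \<noteq> {} \<and> (\<forall>a\<in>M. gpos a) \<and>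
     (\<forall>a\<in>M. \<forall>b\<in>M. a * b \<in> M) \<and> (\<forall>a\<in>M. \<forall>r::real. gpowr a r \<in> M) \<and>
     (\<forall>a\<in>M. \<forall>b\<in>M. gless a b \<or> a = b \<or> gless b a)"

text \<open>Exponent vectors alpha in [0,inf)^(k+1) are encoded as functions nat => real
  vanishing outside {0..k}; a series is its coefficient function.\<close>
type_synonym 'k gser = "(nat \<Rightarrow> real) \<Rightarrow> 'k"

definition gsupp :: "'k::zero gser \<Rightarrow> (nat \<Rightarrow> real) set" where
  "gsupp G = {\<alpha>. G \<alpha> \<noteq> 0}"

definition well_ordered_set :: "real set \<Rightarrow> bool" where
  "well_ordered_set S \<longleftrightarrow> (\<forall>A. A \<subseteq> S \<and> A \<noteq> {} \<longrightarrow> (\<exists>a\<in>A. \<forall>b\<in>A. a \<le> b))"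

definition is_gps :: "nat \<Rightarrow> 'k::zero gser \<Rightarrow> bool" where
  "is_gps k G \<longleftrightarrow>
     (\<forall>\<alpha>\<in>gsupp G. (\<forall>i\<le>k. 0 \<le> \<alpha> i) \<and> (\<forall>i>k. \<alpha> i = 0)) \<and>
     (\<exists>S. (\<forall>i\<le>k. well_ordered_set (S i)) \<and> (\<forall>\<alpha>\<in>gsupp G. \<forall>i\<le>k. \<alpha> i \<in> S i))"

definition natural_support :: "nat \<Rightarrow> 'k::zero gser \<Rightarrow> bool" where
  "natural_support k G \<longleftrightarrow>
     (\<forall>a>0. \<forall>i\<le>k. finite ({0..<a} \<inter> (\<lambda>\<alpha>. \<alpha> i) ` gsupp G))"

definition gps_one :: "'k::{zero,one} gser" where
  "gps_one \<alpha> = (if \<alpha> = (\<lambda>_. 0) then 1 else 0)"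

definition gps_mult :: "'k::comm_ring_1 gser \<Rightarrow> 'k gser \<Rightarrow> 'k gser" where
  "gps_mult G H \<alpha> =
     (\<Sum>(\<beta>, \<gamma>) \<in> {(\<beta>, \<gamma>). G \<beta> \<noteq> 0 \<and> H \<gamma> \<noteq> 0 \<and> (\<lambda>i. \<beta> i + \<gamma> i) = \<alpha>}. G \<beta> * H \<gamma>)"

primrec gps_pow :: "'k::comm_ring_1 gser \<Rightarrow> nat \<Rightarrow> 'k gser" where
  "gps_pow G 0 = gps_one"
| "gps_pow G (Suc n) = gps_mult G (gps_pow G n)"

text \<open>P o G = sum_nu a_nu G^nu (coefficientwise; finitely many nonzero terms when G has
  positive order).\<close>
definition gps_comp :: "'k::comm_ring_1 fps \<Rightarrow> 'k gser \<Rightarrow> 'k gser" where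
  "gps_comp P G \<alpha> = (\<Sum>\<nu> \<in> {\<nu>. gps_pow G \<nu> \<alpha> \<noteq> 0}. fps_nth P \<nu> * gps_pow G \<nu> \<alpha>)"

definition mono_pow :: "nat \<Rightarrow> (nat \<Rightarrow> germ) \<Rightarrow> (nat \<Rightarrow> real) \<Rightarrow> germ" where
  "mono_pow k m \<alpha> = (\<Prod>i\<le>k. gpowr (m i) (\<alpha> i))"

text \<open>G(m) as element of K((M)), written as coefficient function on germs.\<close>
definition gen_eval :: "nat \<Rightarrow> 'k::comm_ring_1 gser \<Rightarrow> (nat \<Rightarrow> germ) \<Rightarrow> germ \<Rightarrow> 'k" where
  "gen_eval k G m n = (\<Sum>\<alpha> \<in> {\<alpha>. G \<alpha> \<noteq> 0 \<and> mono_pow k m \<alpha> = n}. G \<alpha>)"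

definition is_M_gps :: "germ set \<Rightarrow> nat \<Rightarrow> (nat \<Rightarrow> germ) \<Rightarrow> (germ \<Rightarrow> 'k::comm_ring_1) \<Rightarrow> bool" where
  "is_M_gps M k m F \<longleftrightarrow> (\<forall>i\<le>k. m i \<in> M \<and> gsmall (m i)) \<and>
     (\<exists>G. is_gps k G \<and> natural_support k G \<and> F = gen_eval k G m)"

definition is_lm :: "(germ \<Rightarrow> 'k::zero) \<Rightarrow> germ \<Rightarrow> bool" where
  "is_lm F l \<longleftrightarrow> F l \<noteq> 0 \<and> (\<forall>n. F n \<noteq> 0 \<longrightarrow> gle n l)"

definition M_natural :: "germ set \<Rightarrow> germ set \<Rightarrow> bool" where
  "M_natural M S \<longleftrightarrow> (\<forall>a\<in>M. finite {n\<in>S. gless a n})"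

definition coinitial_seq :: "germ set \<Rightarrow> (nat \<Rightarrow> germ) \<Rightarrow> bool" where
  "coinitial_seq M s \<longleftrightarrow> (\<forall>a\<in>M. \<exists>\<nu>. gle (s \<nu>) a)"

end

(*
  Every exponent of P o G is a finite sum of exponents of G, so all supports lie in the set W
  of exponent vectors whose i-th coordinate is a finite sum of i-th coordinates of supp G.
  As supp G is natural, every coordinate set of W is finite below each bound; this gives (1).

  For (2): since the m_i are positive and small, two coordinatewise comparable exponents with
  the same monomial coincide, so by a Dickson-type argument every monomial has only finitely
  many representations in W (even as a product of two). As lm(F) is small, G has no constant
  term, hence positive order, and only finitely many powers G^nu contribute to a given
  monomial n of (P o G)(m). Thus n is a product of nu support monomials of F, each at most
  lm(F) <= 1. If n > a, every factor exceeds a, which leaves finitely many choices by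
  M-naturality of supp F, and lm(F)^nu >= n > a bounds nu by coinitiality.
*)
theory Submission
  imports Defs
begin

section \<open>Germs\<close>

lemma gpowr_add: "gpowr a (r + s) = gpowr a r * gpowr a s"
  by transfer (simp add: germ_eq_def powr_add)

lemma gpowr_0: "gpos a \<Longrightarrow> gpowr a 0 = 1"
  by transfer (auto simp: germ_eq_def elim: eventually_mono)

lemma gpos_1: "gpos 1"
  by transfer simp

lemma gpos_mult: "gpos a \<Longrightarrow> gpos b \<Longrightarrow> gpos (a * b)"
  by transfer (auto elim: eventually_elim2)

lemma gpos_gpowr: "gpos a \<Longrightarrow> gpos (gpowr a r)"
  by transfer (auto elim: eventually_mono)

lemma gpos_prod: "(\<And>i. i \<in> I \<Longrightarrow> gpos (f i)) \<Longrightarrow> gpos (prod f I)"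
  by (induction I rule: infinite_finite_induct) (auto intro: gpos_mult gpos_1)

lemma gpos_prod_list: "\<forall>x\<in>set xs. gpos x \<Longrightarrow> gpos (prod_list xs)"
  by (induction xs) (auto intro: gpos_mult gpos_1)

lemma gpos_power: "gpos a \<Longrightarrow> gpos (a ^ n)"
  by (induction n) (auto intro: gpos_mult gpos_1)

lemma gmult_left_cancel_1: "gpos a \<Longrightarrow> a * b = a \<Longrightarrow> b = 1"
  by transfer (auto simp: germ_eq_def elim: eventually_elim2)

lemma gle_refl: "gle a a"
  by transfer simp

lemma gle_trans: "gle a b \<Longrightarrow> gle b c \<Longrightarrow> gle a c"
  by transfer (auto elim: eventually_elim2)

lemma gless_imp_gle: "gless a b \<Longrightarrow> gle a b"
  by transfer (auto elim: eventually_mono)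

lemma gless_gle_trans: "gless a b \<Longrightarrow> gle b c \<Longrightarrow> gless a c"
  by transfer (auto elim: eventually_elim2)

lemma gless_imp_not_gle: "gless a b \<Longrightarrow> \<not> gle b a"
proof transfer
  fix f g :: "real \<Rightarrow> real"
  assume less: "\<forall>\<^sub>F x in at_top. f x < g x"
  show "\<not> (\<forall>\<^sub>F x in at_top. g x \<le> f x)"
  proof
    assume "\<forall>\<^sub>F x in at_top. g x \<le> f x"
    with less have "\<forall>\<^sub>F x :: real in at_top. False"
      by eventually_elim auto
    then show False
      by simp
  qed
qed

lemma gle_mult_mono:
  "gpos a \<Longrightarrow> gle a b \<Longrightarrow> gpos c \<Longrightarrow> gle c d \<Longrightarrow> gle (a * c) (b * d)"
proof transfer
  fix f g h j :: "real \<Rightarrow> real"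
  assume "\<forall>\<^sub>F x in at_top. 0 < f x" "\<forall>\<^sub>F x in at_top. f x \<le> g x"
    "\<forall>\<^sub>F x in at_top. 0 < h x" "\<forall>\<^sub>F x in at_top. h x \<le> j x"
  then have "\<forall>\<^sub>F x in at_top. (0 < f x \<and> f x \<le> g x) \<and> (0 < h x \<and> h x \<le> j x)"
    by (intro eventually_conj)
  then show "\<forall>\<^sub>F x in at_top. f x * h x \<le> g x * j x"
    by (rule eventually_mono) (auto intro: mult_mono)
qed

lemma gsmall_imp_gless_1: "gsmall a \<Longrightarrow> gless a 1"
proof transfer
  fix f :: "real \<Rightarrow> real"
  assume "(f \<longlongrightarrow> 0) at_top"
  then show "\<forall>\<^sub>F x in at_top. f x < 1"
    by (rule order_tendstoD) simp
qed

lemma not_gsmall_1: "\<not> gsmall 1"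
  using gsmall_imp_gless_1 gless_imp_not_gle gle_refl by blast

lemma gsmall_if_gle: "gpos a \<Longrightarrow> gle a b \<Longrightarrow> gsmall b \<Longrightarrow> gsmall a"
proof transfer
  fix f g :: "real \<Rightarrow> real"
  assume pos: "\<forall>\<^sub>F x in at_top. 0 < f x" and le: "\<forall>\<^sub>F x in at_top. f x \<le> g x"
    and "(g \<longlongrightarrow> 0) at_top"
  have "\<forall>\<^sub>F x in at_top. 0 \<le> f x"
    using pos by (rule eventually_mono) simp
  from this le tendsto_const \<open>(g \<longlongrightarrow> 0) at_top\<close> show "(f \<longlongrightarrow> 0) at_top"
    by (rule tendsto_sandwich)
qed

lemma gsmall_gpowr: "gpos a \<Longrightarrow> gsmall a \<Longrightarrow> 0 < r \<Longrightarrow> gsmall (gpowr a r)"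
proof transfer
  fix f :: "real \<Rightarrow> real" and r :: real
  assume "\<forall>\<^sub>F x in at_top. 0 < f x" "(f \<longlongrightarrow> 0) at_top" "0 < r"
  then have "((\<lambda>x. f x powr r) \<longlongrightarrow> 0 powr r) at_top"
    by (intro tendsto_powr') (auto elim: eventually_mono)
  with \<open>0 < r\<close> show "((\<lambda>x. f x powr r) \<longlongrightarrow> 0) at_top"
    by simp
qed

definition gsubunit :: "germ \<Rightarrow> bool" where
  "gsubunit a \<longleftrightarrow> gpos a \<and> gle a 1"

lemma gsubunit_1: "gsubunit 1"
  by (simp add: gsubunit_def gpos_1 gle_refl)

lemma gsubunit_mult: "gsubunit a \<Longrightarrow> gsubunit b \<Longrightarrow> gsubunit (a * b)"
  using gle_mult_mono[of a 1 b 1] by (simp add: gsubunit_def gpos_mult)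

lemma gsubunit_prod: "(\<And>i. i \<in> I \<Longrightarrow> gsubunit (f i)) \<Longrightarrow> gsubunit (prod f I)"
  by (induction I rule: infinite_finite_induct) (auto intro: gsubunit_mult gsubunit_1)

lemma gsubunit_prod_list: "\<forall>x\<in>set xs. gsubunit x \<Longrightarrow> gsubunit (prod_list xs)"
  by (induction xs) (auto intro: gsubunit_mult gsubunit_1)

lemma gsubunit_power: "gsubunit a \<Longrightarrow> gsubunit (a ^ n)"
  by (induction n) (auto intro: gsubunit_mult gsubunit_1)

lemma gsubunit_if_gsmall: "gpos a \<Longrightarrow> gsmall a \<Longrightarrow> gsubunit a"
  by (simp add: gsubunit_def gless_imp_gle gsmall_imp_gless_1)

lemma gsubunit_gpowr: "gsubunit a \<Longrightarrow> 0 \<le> r \<Longrightarrow> gsubunit (gpowr a r)"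
  unfolding gsubunit_def
proof transfer
  fix f :: "real \<Rightarrow> real" and r :: real
  assume "(\<forall>\<^sub>F x in at_top. 0 < f x) \<and> (\<forall>\<^sub>F x in at_top. f x \<le> 1)" and "0 \<le> r"
  then have pos: "\<forall>\<^sub>F x in at_top. 0 < f x" and le: "\<forall>\<^sub>F x in at_top. f x \<le> 1"
    by auto
  have "\<forall>\<^sub>F x in at_top. f x powr r \<le> 1"
    using pos le by eventually_elim (use \<open>0 \<le> r\<close> in \<open>auto intro: powr_le1\<close>)
  with pos show "(\<forall>\<^sub>F x in at_top. 0 < f x powr r) \<and> (\<forall>\<^sub>F x in at_top. f x powr r \<le> 1)"
    by (auto elim: eventually_mono)
qed

lemma gle_mult_gsubunit: "gpos a \<Longrightarrow> gsubunit b \<Longrightarrow> gle (a * b) a"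
  using gle_mult_mono[of a a b 1] by (simp add: gsubunit_def gle_refl)

lemma gle_prod_list_member: "\<forall>y\<in>set xs. gsubunit y \<Longrightarrow> x \<in> set xs \<Longrightarrow> gle (prod_list xs) x"
proof (induction xs)
  case (Cons y ys)
  have "gsubunit y" and rest: "gsubunit (prod_list ys)"
    using Cons.prems(1) by (auto intro: gsubunit_prod_list)
  show ?case
  proof (cases "x = y")
    case True
    then show ?thesis
      using \<open>gsubunit y\<close> rest gle_mult_gsubunit by (simp add: gsubunit_def)
  next
    case False
    then have "gle (prod_list ys) x"
      using Cons by simp
    moreover have "gle (prod_list ys * y) (prod_list ys)"
      using \<open>gsubunit y\<close> rest gle_mult_gsubunit by (simp add: gsubunit_def)
    ultimately show ?thesis
      by (simp add: mult.commute gle_trans)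
  qed
qed simp

lemma gle_prod_list_power:
  "\<forall>x\<in>set xs. gpos x \<and> gle x l \<Longrightarrow> gle (prod_list xs) (l ^ length xs)"
  by (induction xs) (auto simp: gle_refl intro!: gle_mult_mono gpos_prod_list)

lemma gle_power_antimono:
  assumes "gsubunit a" and "i \<le> j"
  shows "gle (a ^ j) (a ^ i)"
proof -
  have "gle (a ^ i * a ^ (j - i)) (a ^ i)"
    using assms(1) by (intro gle_mult_gsubunit gsubunit_power gpos_power) (simp add: gsubunit_def)
  then show ?thesis
    using assms(2) by (simp flip: power_add)
qed

lemma M_natural_if_products:
  assumes nat: "M_natural M S" and coin: "coinitial_seq M (\<lambda>\<nu>. l ^ \<nu>)" and "gsubunit l"
    and S: "\<And>x. x \<in> S \<Longrightarrow> gpos x \<and> gle x l"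
    and prods: "\<And>n. n \<in> S' \<Longrightarrow> \<exists>ns. set ns \<subseteq> S \<and> n = prod_list ns"
  shows "M_natural M S'"
  unfolding M_natural_def
proof
  fix a assume "a \<in> M"
  then obtain \<nu>0 where "gle (l ^ \<nu>0) a"
    using coin unfolding coinitial_seq_def by blast
  define Sa where "Sa = {x \<in> S. gless a x}"
  have "finite Sa"
    using nat \<open>a \<in> M\<close> unfolding M_natural_def Sa_def by blast
  have "{n \<in> S'. gless a n} \<subseteq> prod_list ` {ns. set ns \<subseteq> Sa \<and> length ns \<le> \<nu>0}"
  proof
    fix n assume n: "n \<in> {n \<in> S'. gless a n}"
    then obtain ns where ns: "set ns \<subseteq> S" "n = prod_list ns"
      using prods by blast
    have "\<forall>x\<in>set ns. gsubunit x"
      using ns(1) S \<open>gsubunit l\<close> by (auto simp: gsubunit_def intro: gle_trans)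
    then have "gless a x" if "x \<in> set ns" for x
      using n ns(2) that by (auto intro: gless_gle_trans gle_prod_list_member)
    then have "set ns \<subseteq> Sa"
      using ns(1) by (auto simp: Sa_def)
    moreover have "length ns \<le> \<nu>0"
    proof (rule ccontr)
      assume "\<not> length ns \<le> \<nu>0"
      then have "gle (l ^ length ns) (l ^ \<nu>0)"
        using \<open>gsubunit l\<close> by (simp add: gle_power_antimono)
      moreover have "gle n (l ^ length ns)"
        using ns S by (auto intro: gle_prod_list_power)
      ultimately have "gle n a"
        using \<open>gle (l ^ \<nu>0) a\<close> by (blast intro: gle_trans)
      with n show False
        using gless_imp_not_gle by blast
    qed
    ultimately show "n \<in> prod_list ` {ns. set ns \<subseteq> Sa \<and> length ns \<le> \<nu>0}"
      using ns(2) by blast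
  qed
  moreover have "finite (prod_list ` {ns. set ns \<subseteq> Sa \<and> length ns \<le> \<nu>0})"
    using \<open>finite Sa\<close> by (simp add: finite_lists_length_le)
  ultimately show "finite {n \<in> S'. gless a n}"
    by (rule finite_subset)
qed

section \<open>Monomials in the generating germs\<close>

lemma mono_pow_add: "mono_pow k m (\<lambda>i. \<alpha> i + \<beta> i) = mono_pow k m \<alpha> * mono_pow k m \<beta>"
  unfolding mono_pow_def by (simp add: gpowr_add prod.distrib)

lemma gen_eval_nonzero_imp:
  assumes "gen_eval k H m n \<noteq> 0"
  obtains \<alpha> where "H \<alpha> \<noteq> 0" "mono_pow k m \<alpha> = n"
proof -
  obtain \<alpha> where "\<alpha> \<in> {\<alpha>. H \<alpha> \<noteq> 0 \<and> mono_pow k m \<alpha> = n}"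
    using assms unfolding gen_eval_def by (rule sum.not_neutral_contains_not_neutral)
  with that show ?thesis
    by blast
qed

locale small_monomials =
  fixes k :: nat and m :: "nat \<Rightarrow> germ"
  assumes m_pos: "\<And>i. i \<le> k \<Longrightarrow> gpos (m i)"
    and m_small: "\<And>i. i \<le> k \<Longrightarrow> gsmall (m i)"
begin

lemma mono_pow_0: "mono_pow k m (\<lambda>_. 0) = 1"
  unfolding mono_pow_def by (simp add: gpowr_0 m_pos)

lemma gpos_mono_pow: "gpos (mono_pow k m \<alpha>)"
  unfolding mono_pow_def by (auto intro!: gpos_prod gpos_gpowr m_pos)

lemma gpos_if_gen_eval_nonzero: "gen_eval k H m n \<noteq> 0 \<Longrightarrow> gpos n"
  by (metis gen_eval_nonzero_imp gpos_mono_pow)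

lemma gsmall_mono_pow:
  assumes nonneg: "\<And>i. i \<le> k \<Longrightarrow> 0 \<le> \<alpha> i" and "i0 \<le> k" "0 < \<alpha> i0"
  shows "gsmall (mono_pow k m \<alpha>)"
proof (rule gsmall_if_gle)
  let ?m0 = "gpowr (m i0) (\<alpha> i0)"
  have split: "mono_pow k m \<alpha> = ?m0 * (\<Prod>i\<in>{..k} - {i0}. gpowr (m i) (\<alpha> i))"
    unfolding mono_pow_def using \<open>i0 \<le> k\<close> by (simp add: prod.remove)
  show "gpos (mono_pow k m \<alpha>)"
    by (rule gpos_mono_pow)
  show "gle (mono_pow k m \<alpha>) ?m0"
    unfolding split using nonneg \<open>i0 \<le> k\<close>
    by (intro gle_mult_gsubunit gpos_gpowr gsubunit_prod gsubunit_gpowr)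
      (auto simp: gsubunit_if_gsmall m_pos m_small)
  show "gsmall ?m0"
    using assms(2,3) by (simp add: gsmall_gpowr m_pos m_small)
qed

lemma mono_pow_eq_imp_eq:
  assumes le: "\<And>i. i \<le> k \<Longrightarrow> \<alpha> i \<le> \<beta> i" and eq: "mono_pow k m \<alpha> = mono_pow k m \<beta>"
    and "i \<le> k"
  shows "\<alpha> i = \<beta> i"
proof (rule ccontr)
  define \<delta> where "\<delta> = (\<lambda>i. \<beta> i - \<alpha> i)"
  assume "\<alpha> i \<noteq> \<beta> i"
  then have "gsmall (mono_pow k m \<delta>)"
    using le \<open>i \<le> k\<close> by (intro gsmall_mono_pow[of \<delta> i]) (auto simp: \<delta>_def less_le)
  moreover have "(\<lambda>i. \<alpha> i + \<delta> i) = \<beta>"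
    by (simp add: \<delta>_def)
  then have "mono_pow k m \<alpha> * mono_pow k m \<delta> = mono_pow k m \<alpha>"
    using eq by (metis mono_pow_add)
  then have "mono_pow k m \<delta> = 1"
    by (rule gmult_left_cancel_1[OF gpos_mono_pow])
  ultimately show False
    using not_gsmall_1 by simp
qed

end

section \<open>Sets of reals that are finite below every bound\<close>

definition finite_below :: "real set \<Rightarrow> bool" where
  "finite_below S \<longleftrightarrow> (\<forall>a. finite (S \<inter> {..<a}))"

lemma finite_below_subset: "T \<subseteq> S \<Longrightarrow> finite_below S \<Longrightarrow> finite_below T"
  unfolding finite_below_def by (meson Int_mono finite_subset order_refl)

lemma finite_below_UN:
  "finite I \<Longrightarrow> (\<And>i. i \<in> I \<Longrightarrow> finite_below (S i)) \<Longrightarrow> finite_below (\<Union>i\<in>I. S i)"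
  unfolding finite_below_def
proof
  fix a
  assume "finite I" and "\<And>i. i \<in> I \<Longrightarrow> \<forall>a. finite (S i \<inter> {..<a})"
  then have "finite (\<Union>i\<in>I. S i \<inter> {..<a})"
    by blast
  then show "finite ((\<Union>i\<in>I. S i) \<inter> {..<a})"
    by (simp add: Int_UN_distrib2)
qed

lemma finite_below_imp_well_ordered:
  assumes "finite_below S"
  shows "well_ordered_set S"
  unfolding well_ordered_set_def
proof (intro allI impI)
  fix A assume A: "A \<subseteq> S \<and> A \<noteq> {}"
  then obtain a where "a \<in> A"
    by auto
  define B where "B = A \<inter> {..<a + 1}"
  have "finite B"
    using assms A unfolding finite_below_def B_def by (meson Int_mono finite_subset order_refl)
  moreover have "a \<in> B"
    using \<open>a \<in> A\<close> by (simp add: B_def)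
  ultimately have "Min B \<in> A"
    using Min_in by (fastforce simp: B_def)
  moreover have "Min B \<le> b" if "b \<in> A" for b
  proof (cases "b < a + 1")
    case True
    then show ?thesis
      using \<open>finite B\<close> that by (simp add: B_def)
  next
    case False
    then show ?thesis
      using Min_le[OF \<open>finite B\<close> \<open>a \<in> B\<close>] by simp
  qed
  ultimately show "\<exists>x\<in>A. \<forall>b\<in>A. x \<le> b"
    by blast
qed

lemma finite_below_positive_gap:
  assumes "finite_below S"
  obtains e where "0 < e" and "\<And>x. x \<in> S \<Longrightarrow> 0 < x \<Longrightarrow> e \<le> x"
proof (cases "S \<inter> {0<..} = {}")
  case True
  then show ?thesis
    using that[of 1] by auto
next
  case False
  then obtain x0 where "x0 \<in> S" "0 < x0"
    by auto
  define E where "E = S \<inter> {0<..} \<inter> {..<x0 + 1}"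
  have "finite E"
    using assms unfolding finite_below_def E_def by (metis finite_Int inf_commute inf_left_commute)
  moreover have "x0 \<in> E"
    using \<open>x0 \<in> S\<close> \<open>0 < x0\<close> by (simp add: E_def)
  then have "0 < Min E"
    using Min_in[OF \<open>finite E\<close>] by (fastforce simp: E_def)
  moreover have "Min E \<le> x" if "x \<in> S" "0 < x" for x
  proof (cases "x < x0 + 1")
    case True
    then show ?thesis
      using \<open>finite E\<close> that by (simp add: E_def)
  next
    case False
    then show ?thesis
      using Min_le[OF \<open>finite E\<close> \<open>x0 \<in> E\<close>] by simp
  qed
  ultimately show ?thesis
    using that by blast
qed

definition finite_sums :: "real set \<Rightarrow> real set" where
  "finite_sums S = {sum_list xs | xs. set xs \<subseteq> S}"

lemma finite_sums_0: "0 \<in> finite_sums S"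
  unfolding finite_sums_def by (auto intro: exI[of _ "[]"])

lemma finite_sums_mem: "x \<in> S \<Longrightarrow> x \<in> finite_sums S"
  unfolding finite_sums_def by (auto intro: exI[of _ "[x]"])

lemma finite_sums_add: "x \<in> finite_sums S \<Longrightarrow> y \<in> finite_sums S \<Longrightarrow> x + y \<in> finite_sums S"
  unfolding finite_sums_def by clarify (metis set_append sum_list_append Un_least)

lemma finite_sums_nonneg: "S \<subseteq> {0..} \<Longrightarrow> x \<in> finite_sums S \<Longrightarrow> 0 \<le> x"
  unfolding finite_sums_def by (auto intro!: sum_list_nonneg)

lemma finite_below_finite_sums:
  assumes nonneg: "S \<subseteq> {0..}" and fb: "finite_below S"
  shows "finite_below (finite_sums S)"
  unfolding finite_below_def
proof
  fix a
  obtain e where "0 < e" and gap: "\<And>x. x \<in> S \<Longrightarrow> 0 < x \<Longrightarrow> e \<le> x"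
    using finite_below_positive_gap[OF fb] by blast
  define L where "L = {ys. set ys \<subseteq> S \<inter> {..<a} \<and> length ys \<le> nat \<lceil>a / e\<rceil>}"
  have "finite L"
    using fb unfolding L_def finite_below_def by (intro finite_lists_length_le) auto
  moreover have "finite_sums S \<inter> {..<a} \<subseteq> sum_list ` L"
  proof
    fix s assume "s \<in> finite_sums S \<inter> {..<a}"
    then obtain xs where xs: "set xs \<subseteq> S" "s = sum_list xs" "s < a"
      unfolding finite_sums_def by auto
    define ys where "ys = filter (\<lambda>x. 0 < x) xs"
    have ys: "set ys \<subseteq> S" "\<forall>y\<in>set ys. e \<le> y"
      using xs(1) gap by (auto simp: ys_def)
    have "sum_list ys = s"
      using xs nonneg unfolding ys_def
      by (induction xs arbitrary: s) (auto simp: subset_eq)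
    then have "\<forall>y\<in>set ys. y < a"
      using ys xs(3) nonneg member_le_sum_list[of _ ys] by (fastforce elim!: le_less_trans)
    moreover have "real (length ys) * e \<le> s"
      using ys(2) \<open>sum_list ys = s\<close> sum_list_mono[of ys "\<lambda>_. e" id] by (simp add: sum_list_triv)
    then have "real (length ys) < a / e"
      using \<open>0 < e\<close> xs(3) by (simp add: field_simps)
    then have "length ys \<le> nat \<lceil>a / e\<rceil>"
      by linarith
    ultimately show "s \<in> sum_list ` L"
      using ys(1) \<open>sum_list ys = s\<close> by (auto simp: L_def)
  qed
  ultimately show "finite (finite_sums S \<inter> {..<a})"
    by (rule finite_surj)
qed

lemma finite_below_incseq_subseq:
  fixes s :: "nat \<Rightarrow> real"
  assumes "finite_below (range s)"
  shows "\<exists>g. strict_mono g \<and> incseq (\<lambda>j. s (g j))"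
proof -
  obtain h where h: "strict_mono h" "monoseq (\<lambda>n. s (h n))"
    using seq_monosub by blast
  show ?thesis
  proof (cases "incseq (\<lambda>n. s (h n))")
    case True
    with h show ?thesis
      by blast
  next
    case False
    with h have dec: "decseq (\<lambda>n. s (h n))"
      by (simp add: monoseq_iff)
    have "s (h n) < s (h 0) + 1" for n
      using decseqD[OF dec, of 0 n] by simp
    then have "range (\<lambda>n. s (h n)) \<subseteq> range s \<inter> {..<s (h 0) + 1}"
      by auto
    then have "finite (range (\<lambda>n. s (h n)))"
      using assms finite_subset unfolding finite_below_def by blast
    then obtain N where N: "\<And>n. s (h N) \<le> s (h n)"
      using Min_in[of "range (\<lambda>n. s (h n))"] Min_le by fastforce
    have "s (h (n + N)) = s (h N)" for n
      using dec N[of "n + N"] by (simp add: decseq_def antisym)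
    moreover have "strict_mono (\<lambda>n. h (n + N))"
      using h(1) by (simp add: strict_mono_def)
    ultimately show ?thesis
      by (intro exI[of _ "\<lambda>n. h (n + N)"]) (simp add: incseq_def)
  qed
qed

lemma finite_below_common_incseq_subseq:
  fixes f :: "nat \<Rightarrow> 'a \<Rightarrow> real"
  assumes "finite I" and "\<And>i. i \<in> I \<Longrightarrow> finite_below (range (\<lambda>j. f j i))"
  shows "\<exists>g. strict_mono g \<and> (\<forall>i\<in>I. incseq (\<lambda>j. f (g j) i))"
  using assms
proof (induction I arbitrary: f rule: finite_induct)
  case empty
  show ?case
    using strict_mono_id by blast
next
  case (insert i I)
  then obtain g where g: "strict_mono g" "\<forall>i\<in>I. incseq (\<lambda>j. f (g j) i)"
    by blast
  have "finite_below (range (\<lambda>j. f (g j) i))"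
    using insert.prems by (rule finite_below_subset[rotated]) auto
  then obtain g' where g': "strict_mono g'" "incseq (\<lambda>j. f (g (g' j)) i)"
    using finite_below_incseq_subseq by blast
  have "\<forall>i\<in>I. incseq (\<lambda>j. f (g (g' j)) i)"
    using g(2) g'(1) by (auto simp: incseq_def strict_mono_less_eq)
  moreover have "strict_mono (\<lambda>j. g (g' j))"
    using g(1) g'(1) by (simp add: strict_mono_def)
  ultimately show ?case
    using g'(2) by blast
qed

section \<open>Supports of products, powers and compositions\<close>

lemma gps_one_nonzero_imp: "gps_one \<alpha> \<noteq> 0 \<Longrightarrow> \<alpha> = (\<lambda>_. 0)"
  unfolding gps_one_def by (auto split: if_splits)

lemma gps_mult_nonzero_imp:
  assumes "gps_mult G H \<alpha> \<noteq> 0"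
  obtains \<beta> \<gamma> where "G \<beta> \<noteq> 0" "H \<gamma> \<noteq> 0" "\<alpha> = (\<lambda>i. \<beta> i + \<gamma> i)"
proof -
  obtain p where "p \<in> {(\<beta>, \<gamma>). G \<beta> \<noteq> 0 \<and> H \<gamma> \<noteq> 0 \<and> (\<lambda>i. \<beta> i + \<gamma> i) = \<alpha>}"
    using assms unfolding gps_mult_def by (rule sum.not_neutral_contains_not_neutral)
  with that show ?thesis
    by auto
qed

lemma gps_comp_nonzero_imp:
  assumes "gps_comp P G \<alpha> \<noteq> 0"
  obtains \<nu> where "gps_pow G \<nu> \<alpha> \<noteq> 0"
proof -
  obtain \<nu> where "\<nu> \<in> {\<nu>. gps_pow G \<nu> \<alpha> \<noteq> 0}"
    using assms unfolding gps_comp_def by (rule sum.not_neutral_contains_not_neutral)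
  with that show ?thesis
    by auto
qed

lemma gps_pow_degree:
  assumes "\<And>\<beta>. G \<beta> \<noteq> 0 \<Longrightarrow> e \<le> (\<Sum>i\<le>k. \<beta> i)"
  shows "gps_pow G \<nu> \<alpha> \<noteq> 0 \<Longrightarrow> real \<nu> * e \<le> (\<Sum>i\<le>k. \<alpha> i)"
proof (induction \<nu> arbitrary: \<alpha>)
  case 0
  then show ?case
    by (auto dest: gps_one_nonzero_imp)
next
  case (Suc \<nu>)
  then obtain \<beta> \<gamma> where "G \<beta> \<noteq> 0" "gps_pow G \<nu> \<gamma> \<noteq> 0" "\<alpha> = (\<lambda>i. \<beta> i + \<gamma> i)"
    by (auto elim: gps_mult_nonzero_imp)
  with assms[of \<beta>] Suc.IH[of \<gamma>] show ?case
    by (simp add: sum.distrib algebra_simps)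
qed

locale exponent_monoid = small_monomials +
  fixes W :: "(nat \<Rightarrow> real) set"
  assumes zero_in_W: "(\<lambda>_. 0) \<in> W"
    and add_in_W: "\<alpha> \<in> W \<Longrightarrow> \<beta> \<in> W \<Longrightarrow> (\<lambda>i. \<alpha> i + \<beta> i) \<in> W"
    and W_nonneg: "\<alpha> \<in> W \<Longrightarrow> i \<le> k \<Longrightarrow> 0 \<le> \<alpha> i"
    and W_zero: "\<alpha> \<in> W \<Longrightarrow> k < i \<Longrightarrow> \<alpha> i = 0"
    and W_finite_below: "i \<le> k \<Longrightarrow> finite_below ((\<lambda>\<alpha>. \<alpha> i) ` W)"
begin

lemma W_eqI: "\<alpha> \<in> W \<Longrightarrow> \<beta> \<in> W \<Longrightarrow> (\<And>i. i \<le> k \<Longrightarrow> \<alpha> i = \<beta> i) \<Longrightarrow> \<alpha> = \<beta>"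
  by (metis W_zero ext not_le)

lemma W_incseq_subseq:
  fixes s :: "nat \<Rightarrow> nat \<Rightarrow> real"
  assumes "range s \<subseteq> W"
  shows "\<exists>g. strict_mono g \<and> (\<forall>i\<le>k. incseq (\<lambda>j. s (g j) i))"
proof -
  have "finite_below (range (\<lambda>j. s j i))" if "i \<le> k" for i
    by (rule finite_below_subset[OF _ W_finite_below[OF that]]) (use assms in auto)
  then show ?thesis
    using finite_below_common_incseq_subseq[of "{..k}" s] by auto
qed

text \<open>A Dickson-type argument: an infinite family of factorizations would contain two
  coordinatewise comparable ones, which \<open>mono_pow_eq_imp_eq\<close> forbids.\<close>
lemma finite_factorizations:
  "finite {(\<beta>, \<gamma>). \<beta> \<in> W \<and> \<gamma> \<in> W \<and> mono_pow k m \<beta> * mono_pow k m \<gamma> = n}"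
  (is "finite ?Q")
proof (rule ccontr)
  assume "infinite ?Q"
  then obtain f :: "nat \<Rightarrow> _" where f: "inj f" "range f \<subseteq> ?Q"
    using infinite_countable_subset by blast
  have fW: "fst (f j) \<in> W" "snd (f j) \<in> W" for j
    using f(2) by (auto simp: subset_eq case_prod_beta)
  then have "range (\<lambda>j. fst (f j)) \<subseteq> W"
    by auto
  then obtain g1 where g1: "strict_mono g1" "\<forall>i\<le>k. incseq (\<lambda>j. fst (f (g1 j)) i)"
    using W_incseq_subseq by blast
  have "range (\<lambda>j. snd (f (g1 j))) \<subseteq> W"
    using fW by auto
  then obtain g2 where g2: "strict_mono g2" "\<forall>i\<le>k. incseq (\<lambda>j. snd (f (g1 (g2 j))) i)"
    using W_incseq_subseq by blast
  obtain \<beta>0 \<gamma>0 \<beta>1 \<gamma>1 where p0: "f (g1 (g2 0)) = (\<beta>0, \<gamma>0)" and p1: "f (g1 (g2 1)) = (\<beta>1, \<gamma>1)"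
    by (metis surj_pair)
  have in_Q: "(\<beta>0, \<gamma>0) \<in> ?Q" "(\<beta>1, \<gamma>1) \<in> ?Q"
    using f(2) by (simp_all flip: p0 p1 add: image_subset_iff)
  have "g2 0 \<le> g2 1"
    using g2(1) by (simp add: strict_mono_less_eq)
  then have le: "\<beta>0 i \<le> \<beta>1 i" "\<gamma>0 i \<le> \<gamma>1 i" if "i \<le> k" for i
    using that g1(2) g2(2) p0 p1 incseqD[of "\<lambda>j. fst (f (g1 j)) i" "g2 0" "g2 1"]
      incseqD[of "\<lambda>j. snd (f (g1 (g2 j))) i" 0 1] by auto
  have "mono_pow k m (\<lambda>i. \<beta>0 i + \<gamma>0 i) = mono_pow k m (\<lambda>i. \<beta>1 i + \<gamma>1 i)"
    using in_Q by (simp add: mono_pow_add)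
  then have "\<beta>0 i + \<gamma>0 i = \<beta>1 i + \<gamma>1 i" if "i \<le> k" for i
    using le that by (intro mono_pow_eq_imp_eq) (auto intro: add_mono)
  then have "\<beta>0 i = \<beta>1 i \<and> \<gamma>0 i = \<gamma>1 i" if "i \<le> k" for i
    using le[OF that] that by fastforce
  with in_Q have "\<beta>0 = \<beta>1" "\<gamma>0 = \<gamma>1"
    by (auto intro!: W_eqI)
  then have "g1 (g2 0) = g1 (g2 1)"
    using f(1) p0 p1 by (metis injD)
  then show False
    using g1(1) g2(1) by (simp add: strict_mono_eq)
qed

lemma finite_fiber: "finite {\<alpha> \<in> W. mono_pow k m \<alpha> = n}"
proof -
  have "{\<alpha> \<in> W. mono_pow k m \<alpha> = n}
      \<subseteq> fst ` {(\<beta>, \<gamma>). \<beta> \<in> W \<and> \<gamma> \<in> W \<and> mono_pow k m \<beta> * mono_pow k m \<gamma> = n}"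
    using zero_in_W by (force simp: mono_pow_0)
  then show ?thesis
    by (rule finite_surj[OF finite_factorizations])
qed

lemma fiber_1: "{\<alpha> \<in> W. mono_pow k m \<alpha> = 1} = {\<lambda>_. 0}"
proof -
  have "\<alpha> = (\<lambda>_. 0)" if "\<alpha> \<in> W" "mono_pow k m \<alpha> = 1" for \<alpha>
  proof (rule W_eqI[OF \<open>\<alpha> \<in> W\<close> zero_in_W])
    fix i assume "i \<le> k"
    have "0 = \<alpha> i"
      using W_nonneg[OF \<open>\<alpha> \<in> W\<close>] \<open>mono_pow k m \<alpha> = 1\<close> \<open>i \<le> k\<close>
      by (intro mono_pow_eq_imp_eq[of "\<lambda>_. 0"]) (simp_all add: mono_pow_0)
    then show "\<alpha> i = 0"
      by simp
  qed
  then show ?thesis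
    using zero_in_W mono_pow_0 by blast
qed

lemma gsupp_gps_pow_subset: "gsupp G \<subseteq> W \<Longrightarrow> gsupp (gps_pow G \<nu>) \<subseteq> W"
proof (induction \<nu>)
  case 0
  then show ?case
    using zero_in_W by (auto simp: gsupp_def dest: gps_one_nonzero_imp)
next
  case (Suc \<nu>)
  then show ?case
    unfolding gsupp_def by (auto elim!: gps_mult_nonzero_imp intro!: add_in_W)
qed

lemma gsupp_gps_comp_subset: "gsupp G \<subseteq> W \<Longrightarrow> gsupp (gps_comp P G) \<subseteq> W"
  using gsupp_gps_pow_subset unfolding gsupp_def by (blast elim: gps_comp_nonzero_imp)

lemma gen_eval_eq_sum_fiber:
  "gsupp H \<subseteq> W \<Longrightarrow> gen_eval k H m n = (\<Sum>\<alpha> \<in> {\<alpha> \<in> W. mono_pow k m \<alpha> = n}. H \<alpha>)"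
  unfolding gen_eval_def gsupp_def by (rule sum.mono_neutral_left[OF finite_fiber]) auto

lemma gen_eval_gps_mult:
  assumes "gsupp G \<subseteq> W" "gsupp H \<subseteq> W"
  shows "gen_eval k (gps_mult G H) m n =
    (\<Sum>(\<beta>, \<gamma>) \<in> {(\<beta>, \<gamma>). G \<beta> \<noteq> 0 \<and> H \<gamma> \<noteq> 0 \<and> mono_pow k m \<beta> * mono_pow k m \<gamma> = n}. G \<beta> * H \<gamma>)"
    (is "_ = sum ?f ?Q")
proof -
  let ?fiber = "{\<alpha> \<in> W. mono_pow k m \<alpha> = n}"
  let ?add = "\<lambda>(\<beta>, \<gamma>). \<lambda>i::nat. \<beta> i + \<gamma> i"
  have "finite ?Q"
    using assms by (intro finite_subset[OF _ finite_factorizations[of n]]) (auto simp: gsupp_def)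
  have "gsupp (gps_mult G H) \<subseteq> W"
    using assms unfolding gsupp_def by (auto elim!: gps_mult_nonzero_imp intro!: add_in_W)
  then have "gen_eval k (gps_mult G H) m n = (\<Sum>\<alpha> \<in> ?fiber. gps_mult G H \<alpha>)"
    by (rule gen_eval_eq_sum_fiber)
  also have "\<dots> = (\<Sum>\<alpha> \<in> ?fiber. sum ?f {p \<in> ?Q. ?add p = \<alpha>})"
  proof (rule sum.cong[OF refl])
    fix \<alpha> assume "\<alpha> \<in> ?fiber"
    then have "{(\<beta>, \<gamma>). G \<beta> \<noteq> 0 \<and> H \<gamma> \<noteq> 0 \<and> (\<lambda>i. \<beta> i + \<gamma> i) = \<alpha>} = {p \<in> ?Q. ?add p = \<alpha>}"
      by (auto simp flip: mono_pow_add)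
    then show "gps_mult G H \<alpha> = sum ?f {p \<in> ?Q. ?add p = \<alpha>}"
      by (simp add: gps_mult_def)
  qed
  also have "\<dots> = sum ?f ?Q"
    using assms \<open>finite ?Q\<close> finite_fiber
    by (intro sum.group) (auto simp: gsupp_def mono_pow_add intro: add_in_W)
  finally show ?thesis .
qed

lemma gen_eval_gps_mult_nonzero_imp:
  assumes "gsupp G \<subseteq> W" "gsupp H \<subseteq> W" and "gen_eval k (gps_mult G H) m n \<noteq> 0"
  obtains n1 n2 where "n = n1 * n2" "gen_eval k G m n1 \<noteq> 0" "gen_eval k H m n2 \<noteq> 0"
proof -
  let ?Q = "{(\<beta>, \<gamma>). G \<beta> \<noteq> 0 \<and> H \<gamma> \<noteq> 0 \<and> mono_pow k m \<beta> * mono_pow k m \<gamma> = n}"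
  let ?f = "\<lambda>(\<beta>, \<gamma>). G \<beta> * H \<gamma>"
  let ?mono = "\<lambda>(\<beta>, \<gamma>). (mono_pow k m \<beta>, mono_pow k m \<gamma>)"
  have "finite ?Q"
    using assms by (intro finite_subset[OF _ finite_factorizations[of n]]) (auto simp: gsupp_def)
  have "sum ?f ?Q = (\<Sum>q \<in> ?mono ` ?Q. sum ?f {p \<in> ?Q. ?mono p = q})"
    using \<open>finite ?Q\<close> by (intro sum.group[symmetric]) auto
  then have "(\<Sum>q \<in> ?mono ` ?Q. sum ?f {p \<in> ?Q. ?mono p = q}) \<noteq> 0"
    using assms(3) gen_eval_gps_mult[OF assms(1,2)] by simp
  then obtain q where q: "q \<in> ?mono ` ?Q" "sum ?f {p \<in> ?Q. ?mono p = q} \<noteq> 0"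
    by (rule sum.not_neutral_contains_not_neutral)
  obtain n1 n2 where q_eq: "q = (n1, n2)"
    by fastforce
  have "n = n1 * n2"
    using q(1) q_eq by auto
  then have "{p \<in> ?Q. ?mono p = q} =
      {\<beta>. G \<beta> \<noteq> 0 \<and> mono_pow k m \<beta> = n1} \<times> {\<gamma>. H \<gamma> \<noteq> 0 \<and> mono_pow k m \<gamma> = n2}"
    using q_eq by auto
  then have "sum ?f {p \<in> ?Q. ?mono p = q} = gen_eval k G m n1 * gen_eval k H m n2"
    by (simp add: gen_eval_def sum_product sum.cartesian_product)
  with q(2) have "gen_eval k G m n1 * gen_eval k H m n2 \<noteq> 0"
    by simp
  then show ?thesis
    by (intro that[OF \<open>n = n1 * n2\<close>]) auto
qed

lemma gen_eval_gps_pow_nonzero_imp: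
  assumes "gsupp G \<subseteq> W"
  shows "gen_eval k (gps_pow G \<nu>) m n \<noteq> 0 \<Longrightarrow>
    \<exists>ns. length ns = \<nu> \<and> (\<forall>x \<in> set ns. gen_eval k G m x \<noteq> 0) \<and> n = prod_list ns"
proof (induction \<nu> arbitrary: n)
  case 0
  then obtain \<alpha> where "gps_pow G 0 \<alpha> \<noteq> 0" "mono_pow k m \<alpha> = n"
    by (rule gen_eval_nonzero_imp)
  then have "n = 1"
    by (auto dest: gps_one_nonzero_imp simp: mono_pow_0)
  then show ?case
    by simp
next
  case (Suc \<nu>)
  have "gen_eval k (gps_mult G (gps_pow G \<nu>)) m n \<noteq> 0"
    using Suc.prems by simp
  then obtain n1 n2 where "n = n1 * n2" "gen_eval k G m n1 \<noteq> 0" "gen_eval k (gps_pow G \<nu>) m n2 \<noteq> 0"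
    by (rule gen_eval_gps_mult_nonzero_imp[OF assms gsupp_gps_pow_subset[OF assms]])
  with Suc.IH show ?case
    by (metis length_Cons prod_list.Cons set_ConsD)
qed

lemma W_degree_gap:
  obtains e where "0 < e" and "\<And>\<alpha>. \<alpha> \<in> W \<Longrightarrow> \<alpha> \<noteq> (\<lambda>_. 0) \<Longrightarrow> e \<le> (\<Sum>i\<le>k. \<alpha> i)"
proof -
  have "finite_below (\<Union>i\<le>k. (\<lambda>\<alpha>. \<alpha> i) ` W)"
    by (intro finite_below_UN W_finite_below) auto
  then obtain e where "0 < e" and gap: "\<And>x. x \<in> (\<Union>i\<le>k. (\<lambda>\<alpha>. \<alpha> i) ` W) \<Longrightarrow> 0 < x \<Longrightarrow> e \<le> x"
    using finite_below_positive_gap by blast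
  have "e \<le> (\<Sum>i\<le>k. \<alpha> i)" if "\<alpha> \<in> W" "\<alpha> \<noteq> (\<lambda>_. 0)" for \<alpha>
  proof -
    obtain i where "i \<le> k" "\<alpha> i \<noteq> 0"
      using W_eqI[OF \<open>\<alpha> \<in> W\<close> zero_in_W] \<open>\<alpha> \<noteq> (\<lambda>_. 0)\<close> by blast
    then have "e \<le> \<alpha> i"
      using that W_nonneg[of \<alpha> i] by (intro gap) force+
    also have "\<alpha> i \<le> (\<Sum>i\<le>k. \<alpha> i)"
      using \<open>i \<le> k\<close> W_nonneg[OF \<open>\<alpha> \<in> W\<close>] by (intro member_le_sum) auto
    finally show ?thesis .
  qed
  with \<open>0 < e\<close> that show ?thesis
    by blast
qed

text \<open>Without constant term, \<open>G\<^sup>\<nu>\<close> has order at least \<open>\<nu>\<close> times the positive order of \<open>G\<close>,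
  so only finitely many powers contribute to a given monomial.\<close>
lemma gen_eval_gps_comp_nonzero_imp:
  assumes G: "gsupp G \<subseteq> W" "G (\<lambda>_. 0) = 0" and nz: "gen_eval k (gps_comp P G) m n \<noteq> 0"
  obtains \<nu> where "gen_eval k (gps_pow G \<nu>) m n \<noteq> 0"
proof -
  let ?fiber = "{\<alpha> \<in> W. mono_pow k m \<alpha> = n}"
  obtain e where "0 < e" and gap: "\<And>\<alpha>. \<alpha> \<in> W \<Longrightarrow> \<alpha> \<noteq> (\<lambda>_. 0) \<Longrightarrow> e \<le> (\<Sum>i\<le>k. \<alpha> i)"
    using W_degree_gap by blast
  have "e \<le> (\<Sum>i\<le>k. \<beta> i)" if "G \<beta> \<noteq> 0" for \<beta>
    using G that by (intro gap) (auto simp: gsupp_def)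
  then have deg: "real \<nu> * e \<le> (\<Sum>i\<le>k. \<alpha> i)" if "gps_pow G \<nu> \<alpha> \<noteq> 0" for \<nu> \<alpha>
    using that by (rule gps_pow_degree)
  define B where "B = (\<Sum>\<alpha> \<in> ?fiber. nat \<lceil>(\<Sum>i\<le>k. \<alpha> i) / e\<rceil>)"
  have bound: "\<nu> \<le> B" if "\<alpha> \<in> ?fiber" "gps_pow G \<nu> \<alpha> \<noteq> 0" for \<alpha> \<nu>
  proof -
    have "real \<nu> \<le> (\<Sum>i\<le>k. \<alpha> i) / e"
      using deg[OF that(2)] \<open>0 < e\<close> by (simp add: field_simps)
    then have "\<nu> \<le> nat \<lceil>(\<Sum>i\<le>k. \<alpha> i) / e\<rceil>"
      by linarith
    also have "\<dots> \<le> B"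
      unfolding B_def using that(1) finite_fiber by (intro member_le_sum) auto
    finally show ?thesis .
  qed
  have "gen_eval k (gps_comp P G) m n = (\<Sum>\<alpha> \<in> ?fiber. gps_comp P G \<alpha>)"
    using G(1) by (intro gen_eval_eq_sum_fiber gsupp_gps_comp_subset)
  also have "\<dots> = (\<Sum>\<alpha> \<in> ?fiber. \<Sum>\<nu>\<le>B. fps_nth P \<nu> * gps_pow G \<nu> \<alpha>)"
    unfolding gps_comp_def using bound by (intro sum.cong refl sum.mono_neutral_left) auto
  also have "\<dots> = (\<Sum>\<nu>\<le>B. fps_nth P \<nu> * (\<Sum>\<alpha> \<in> ?fiber. gps_pow G \<nu> \<alpha>))"
    by (simp add: sum.swap[of _ ?fiber] sum_distrib_left)
  also have "\<dots> = (\<Sum>\<nu>\<le>B. fps_nth P \<nu> * gen_eval k (gps_pow G \<nu>) m n)"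
    using G(1) by (simp add: gen_eval_eq_sum_fiber gsupp_gps_pow_subset)
  finally obtain \<nu> where "fps_nth P \<nu> * gen_eval k (gps_pow G \<nu>) m n \<noteq> 0"
    using nz by (metis (no_types, lifting) sum.not_neutral_contains_not_neutral)
  with that show ?thesis
    using mult_not_zero by blast
qed

lemma is_gps_if_gsupp_subset: "gsupp H \<subseteq> W \<Longrightarrow> is_gps k H"
  unfolding is_gps_def using W_nonneg W_zero W_finite_below
  by (intro conjI ballI allI impI exI[of _ "\<lambda>i. (\<lambda>\<alpha>. \<alpha> i) ` W"] finite_below_imp_well_ordered) auto

lemma natural_support_if_gsupp_subset:
  assumes "gsupp H \<subseteq> W"
  shows "natural_support k H"
  unfolding natural_support_def
proof (intro allI impI)
  fix a :: real and i assume "i \<le> k"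
  have "{0..<a} \<inter> (\<lambda>\<alpha>. \<alpha> i) ` gsupp H \<subseteq> (\<lambda>\<alpha>. \<alpha> i) ` W \<inter> {..<a}"
    using assms by auto
  then show "finite ({0..<a} \<inter> (\<lambda>\<alpha>. \<alpha> i) ` gsupp H)"
    using W_finite_below[OF \<open>i \<le> k\<close>] unfolding finite_below_def by (meson finite_subset)
qed

lemma constant_coeff_eq_0:
  assumes "gsupp G \<subseteq> W" and "is_lm (gen_eval k G m) l" and "gsmall l"
  shows "G (\<lambda>_. 0) = 0"
proof (rule ccontr)
  assume "G (\<lambda>_. 0) \<noteq> 0"
  moreover have "gen_eval k G m 1 = G (\<lambda>_. 0)"
    using assms(1) by (simp add: gen_eval_eq_sum_fiber fiber_1)
  ultimately have "gle 1 l"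
    using assms(2) by (simp add: is_lm_def)
  with \<open>gsmall l\<close> show False
    using gsmall_imp_gless_1 gless_imp_not_gle by blast
qed

lemma M_natural_gen_eval_gps_comp:
  assumes G: "gsupp G \<subseteq> W" and lm: "is_lm (gen_eval k G m) l" "gsmall l"
    and nat: "M_natural M {n. gen_eval k G m n \<noteq> 0}" and coin: "coinitial_seq M (\<lambda>\<nu>. l ^ \<nu>)"
  shows "M_natural M {n. gen_eval k (gps_comp P G) m n \<noteq> 0}"
proof (rule M_natural_if_products[OF nat coin])
  show "gsubunit l"
    using lm by (auto simp: is_lm_def intro: gsubunit_if_gsmall gpos_if_gen_eval_nonzero)
  show "gpos x \<and> gle x l" if "x \<in> {n. gen_eval k G m n \<noteq> 0}" for x
    using that lm(1) by (auto simp: is_lm_def intro: gpos_if_gen_eval_nonzero)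
  show "\<exists>ns. set ns \<subseteq> {n. gen_eval k G m n \<noteq> 0} \<and> n = prod_list ns"
    if "n \<in> {n. gen_eval k (gps_comp P G) m n \<noteq> 0}" for n
  proof -
    have "G (\<lambda>_. 0) = 0"
      using G lm by (rule constant_coeff_eq_0)
    with G that obtain \<nu> where "gen_eval k (gps_pow G \<nu>) m n \<noteq> 0"
      by (auto elim: gen_eval_gps_comp_nonzero_imp)
    with G show ?thesis
      by (auto dest: gen_eval_gps_pow_nonzero_imp)
  qed
qed

end

section \<open>The exponent monoid of a generalized power series\<close>

definition supp_monoid :: "nat \<Rightarrow> 'k::zero gser \<Rightarrow> (nat \<Rightarrow> real) set" where
  "supp_monoid k G =
    {\<alpha>. (\<forall>i\<le>k. \<alpha> i \<in> finite_sums ((\<lambda>\<beta>. \<beta> i) ` gsupp G)) \<and> (\<forall>i>k. \<alpha> i = 0)}"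

lemma gsupp_subset_supp_monoid: "is_gps k G \<Longrightarrow> gsupp G \<subseteq> supp_monoid k G"
  unfolding is_gps_def supp_monoid_def by (auto intro: finite_sums_mem)

lemma finite_below_coordinates:
  assumes "is_gps k G" "natural_support k G" "i \<le> k"
  shows "finite_below ((\<lambda>\<beta>. \<beta> i) ` gsupp G)"
  unfolding finite_below_def
proof
  fix a :: real
  have "(\<lambda>\<beta>. \<beta> i) ` gsupp G \<inter> {..<a} = {0..<a} \<inter> (\<lambda>\<beta>. \<beta> i) ` gsupp G"
    using assms(1,3) unfolding is_gps_def by auto
  then show "finite ((\<lambda>\<beta>. \<beta> i) ` gsupp G \<inter> {..<a})"
    using assms(2,3) unfolding natural_support_def by (cases "0 < a") auto
qed

lemma exponent_monoid_supp_monoid: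
  assumes "small_monomials k m" "is_gps k G" "natural_support k G"
  shows "exponent_monoid k m (supp_monoid k G)"
proof -
  have nonneg: "(\<lambda>\<beta>. \<beta> i) ` gsupp G \<subseteq> {0..}" if "i \<le> k" for i
    using assms(2) that unfolding is_gps_def by auto
  show ?thesis
  proof (intro exponent_monoid.intro[OF assms(1)] exponent_monoid_axioms.intro)
    show "(\<lambda>_. 0) \<in> supp_monoid k G"
      by (simp add: supp_monoid_def finite_sums_0)
    show "(\<lambda>i. \<alpha> i + \<beta> i) \<in> supp_monoid k G"
      if "\<alpha> \<in> supp_monoid k G" "\<beta> \<in> supp_monoid k G" for \<alpha> \<beta>
      using that by (simp add: supp_monoid_def finite_sums_add)
    show "0 \<le> \<alpha> i" if "\<alpha> \<in> supp_monoid k G" "i \<le> k" for \<alpha> i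
      using that nonneg[OF \<open>i \<le> k\<close>] by (simp add: supp_monoid_def finite_sums_nonneg)
    show "\<alpha> i = 0" if "\<alpha> \<in> supp_monoid k G" "k < i" for \<alpha> i
      using that by (simp add: supp_monoid_def)
    show "finite_below ((\<lambda>\<alpha>. \<alpha> i) ` supp_monoid k G)" if "i \<le> k" for i
    proof (rule finite_below_subset)
      show "(\<lambda>\<alpha>. \<alpha> i) ` supp_monoid k G \<subseteq> finite_sums ((\<lambda>\<beta>. \<beta> i) ` gsupp G)"
        using \<open>i \<le> k\<close> by (auto simp: supp_monoid_def)
      show "finite_below (finite_sums ((\<lambda>\<beta>. \<beta> i) ` gsupp G))"
        using assms(2,3) \<open>i \<le> k\<close> nonneg by (intro finite_below_finite_sums finite_below_coordinates)
    qed
  qed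
qed

theorem proposition5p9:
  fixes M :: "germ set" and k :: nat and m :: "nat \<Rightarrow> germ"
    and F :: "germ \<Rightarrow> 'k::{comm_ring_1, ring_char_0}" and P :: "'k fps"
    and G :: "'k gser" and l :: germ
  assumes M: "mult_R_subspace M"
    and F: "is_M_gps M k m F"
    and G: "is_gps k G" "natural_support k G" "F = gen_eval k G m"
    and lm: "is_lm F l" "gsmall l"
  shows "is_M_gps M k m (gen_eval k (gps_comp P G) m) \<and>
         (M_natural M {n. F n \<noteq> 0} \<and> coinitial_seq M (\<lambda>\<nu>. l ^ \<nu>) \<longrightarrow>
          M_natural M {n. gen_eval k (gps_comp P G) m n \<noteq> 0})"
proof -
  have "small_monomials k m"
    using M F by (auto simp: small_monomials_def is_M_gps_def mult_R_subspace_def)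
  then interpret exponent_monoid k m "supp_monoid k G"
    using G(1,2) by (rule exponent_monoid_supp_monoid)
  have supp_G: "gsupp G \<subseteq> supp_monoid k G"
    using G(1) by (rule gsupp_subset_supp_monoid)
  then have "gsupp (gps_comp P G) \<subseteq> supp_monoid k G"
    by (rule gsupp_gps_comp_subset)
  then have "is_M_gps M k m (gen_eval k (gps_comp P G) m)"
    using F unfolding is_M_gps_def
    by (blast intro: is_gps_if_gsupp_subset natural_support_if_gsupp_subset)
  moreover have "M_natural M {n. F n \<noteq> 0} \<and> coinitial_seq M (\<lambda>\<nu>. l ^ \<nu>) \<longrightarrow>
      M_natural M {n. gen_eval k (gps_comp P G) m n \<noteq> 0}"
    using M_natural_gen_eval_gps_comp[OF supp_G] lm unfolding G(3) by blast
  ultimately show ?thesis ..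
qed

end
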